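(* Let $\mathbf{s}=(s_1,\ldots,s_r)$ and $\mathbf{t}=(t_1,\ldots,t_r)$ be $r$-tuples of positive integers such that $s_1+\cdots+s_r\ge t_1+\cdots+t_r$ and there is an index $l$ with $0\le l\le r-1$ such that $s_i\le t_i$ for $1\le i\le l$ and $s_i\ge t_i$ for $l+1\le i\le r$. Then for every positive integer $n$, $H_n(s_1,\ldots,s_r)\le H_n(t_1,\ldots,t_r)$. In particular this holds whenever $s_i\ge t_i$ for all $i$.
   Context: $H_n(s_1,\ldots,s_r)=\sum_{1\le k_1<k_2<\cdots<k_r\le n}\frac{1}{k_1^{s_1}\cdots k_r^{s_r}}$ (an empty sum, equal to $0$, if $n<r$). *)

theory Defs
  imports Complex_Main
begin

text \<open>Index tuples 1 \<le> k_1 < ... < k_r \<le> n, represented 0-based as functions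
  k :: nat \<Rightarrow> nat with k i for i < r, and k i = 0 for i \<ge> r.\<close>
definition incr_tuples :: "nat \<Rightarrow> nat \<Rightarrow> (nat \<Rightarrow> nat) set" where
  "incr_tuples r n = {k. (\<forall>i<r. 1 \<le> k i \<and> k i \<le> n)
                        \<and> (\<forall>i. Suc i < r \<longrightarrow> k i < k (Suc i))
                        \<and> (\<forall>i\<ge>r. k i = 0)}"

text \<open>Multiple harmonic sum H_n(s_1,...,s_r); the list s has s ! (i-1) = s_i.\<close>
definition H :: "nat \<Rightarrow> nat list \<Rightarrow> real" where
  "H n s = (\<Sum>k\<in>incr_tuples (length s) n. \<Prod>i<length s. 1 / (real (k i) ^ (s ! i)))"

end

theory Submission
  imports Defs
begin

text \<open>Fix a tuple k and use its l-th entry m as a pivot: the entries before it are at most m,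
  where the exponent grows from s to t, and the entries from it on are at least m, where the
  exponent shrinks. Exchanging powers of k_i against powers of m therefore gives
  \<open>\<Prod> k_i^{t_i} \<cdot> m^{\<Sigma>s} \<le> \<Prod> k_i^{s_i} \<cdot> m^{\<Sigma>t} \<le> \<Prod> k_i^{s_i} \<cdot> m^{\<Sigma>s}\<close>,
  so every term of H_n(s) is at most the corresponding term of H_n(t).\<close>

lemma power_exchange_le:
  fixes a m :: "'a::linordered_semidom"
  assumes "0 \<le> a" "a \<le> m" "p \<le> q"
  shows "a ^ q * m ^ p \<le> a ^ p * m ^ q"
proof -
  have "a ^ q * m ^ p = a ^ p * (a ^ (q - p) * m ^ p)"
    using \<open>p \<le> q\<close> by (metis le_add_diff_inverse mult.assoc power_add)
  also have "\<dots> \<le> a ^ p * (m ^ (q - p) * m ^ p)"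
    using assms by (intro mult_left_mono mult_right_mono power_mono) auto
  also have "\<dots> = a ^ p * m ^ q"
    using \<open>p \<le> q\<close> by (metis le_add_diff_inverse2 power_add)
  finally show ?thesis .
qed

lemma prod_power_le_via_pivot:
  fixes k :: "'b \<Rightarrow> 'a::linordered_idom" and s t :: "'b \<Rightarrow> nat"
  assumes "finite A" "1 \<le> m" "sum t A \<le> sum s A"
    and "\<And>i. i \<in> A \<Longrightarrow> 0 \<le> k i"
    and "\<And>i. i \<in> A \<Longrightarrow> (k i \<le> m \<and> s i \<le> t i) \<or> (m \<le> k i \<and> t i \<le> s i)"
  shows "(\<Prod>i\<in>A. k i ^ t i) \<le> (\<Prod>i\<in>A. k i ^ s i)"
proof -
  have "k i ^ t i * m ^ s i \<le> k i ^ s i * m ^ t i" if "i \<in> A" for i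
    using assms(4,5)[OF that] power_exchange_le[of "k i" m "s i" "t i"]
      power_exchange_le[of m "k i" "t i" "s i"] \<open>1 \<le> m\<close>
    by (auto simp: mult.commute)
  then have "(\<Prod>i\<in>A. k i ^ t i * m ^ s i) \<le> (\<Prod>i\<in>A. k i ^ s i * m ^ t i)"
    using assms(2,4) by (intro prod_mono) auto
  then have "(\<Prod>i\<in>A. k i ^ t i) * m ^ sum s A \<le> (\<Prod>i\<in>A. k i ^ s i) * m ^ sum t A"
    by (simp add: prod.distrib power_sum)
  also have "\<dots> \<le> (\<Prod>i\<in>A. k i ^ s i) * m ^ sum s A"
    using assms(2,3,4) by (intro mult_left_mono power_increasing prod_nonneg) auto
  finally show ?thesis
    using \<open>1 \<le> m\<close> by (simp add: mult_le_cancel_right_pos)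
qed

lemma incr_tuples_pos:
  assumes "k \<in> incr_tuples r n" "i < r"
  shows "0 < k i"
  using assms unfolding incr_tuples_def by auto

lemma incr_tuples_mono:
  assumes "k \<in> incr_tuples r n" "i \<le> j" "j < r"
  shows "k i \<le> k j"
  using assms(2,3)
proof (induction j)
  case 0
  then show ?case by simp
next
  case (Suc j)
  show ?case
  proof (cases "i = Suc j")
    case False
    then have "k i \<le> k j" using Suc by simp
    also have "k j < k (Suc j)" using assms(1) Suc.prems unfolding incr_tuples_def by auto
    finally show ?thesis by simp
  qed simp
qed

theorem lemma2:
  fixes s t :: "nat list" and l n :: nat
  assumes "length t = length s"
    and "\<forall>i<length s. 0 < s ! i" and "\<forall>i<length t. 0 < t ! i"
    and "sum_list s \<ge> sum_list t"
    and "1 \<le> length s" and "l \<le> length s - 1"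
    and "\<forall>i<l. s ! i \<le> t ! i"
    and "\<forall>i. l \<le> i \<and> i < length s \<longrightarrow> s ! i \<ge> t ! i"
    and "0 < n"
  shows "H n s \<le> H n t"
  unfolding H_def assms(1)
proof (rule sum_mono)
  fix k assume k: "k \<in> incr_tuples (length s) n"
  let ?P = "\<lambda>u. \<Prod>i<length s. real (k i) ^ (u ! i)"
  have "l < length s" using assms(5,6) by simp
  have "?P t \<le> ?P s"
  proof (rule prod_power_le_via_pivot[where m = "real (k l)"])
    show "1 \<le> real (k l)" using incr_tuples_pos[OF k \<open>l < length s\<close>] by simp
    show "(\<Sum>i<length s. t ! i) \<le> (\<Sum>i<length s. s ! i)"
      using assms(1,4) by (simp add: sum_list_sum_nth atLeast0LessThan)
    show "(real (k i) \<le> real (k l) \<and> s ! i \<le> t ! i) \<or> (real (k l) \<le> real (k i) \<and> t ! i \<le> s ! i)"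
      if "i \<in> {..<length s}" for i
      using that assms(7,8) incr_tuples_mono[OF k, of i l] incr_tuples_mono[OF k, of l i]
        \<open>l < length s\<close> by (cases "i < l") auto
  qed auto
  moreover have "0 < ?P t"
    using incr_tuples_pos[OF k] by (intro prod_pos) auto
  ultimately show "(\<Prod>i<length s. 1 / real (k i) ^ (s ! i)) \<le> (\<Prod>i<length s. 1 / real (k i) ^ (t ! i))"
    by (simp add: prod_dividef frac_le)
qed

end
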